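(* Let $\Lambda$ be a finite non-empty set, let $(\xi_x)_{x\in\Lambda}$ be IID real random variables (law $\mathbb P$) with $\mathbb P(\xi_x\ge-1)=1$ and $\mathbb E[(\log(1+\xi_x))_+]<\infty$, and let $\mathbf P_\Lambda$ be an arbitrary (deterministic) probability distribution of a random vector $(\delta_x)_{x\in\Lambda}\in\{0,1\}^\Lambda$. Then $$\mathbb E\log\mathbf E_\Lambda\Big[\prod_{x\in\Lambda:\,\delta_x=1}(1+\xi_x)\Big]\le|\Lambda|\max_{p\in[0,1]}\mathbb E\big[\log(1+p\,\xi)\big],$$ where $\xi$ has the law of $\xi_x$ and an empty product equals $1$.
   Context: $\mathbb E$ denotes expectation with respect to the $\xi$'s, $\mathbf E_\Lambda$ expectation with respect to $\mathbf P_\Lambda$; $(a)_+=\max(a,0)$. The function $p\mapsto\mathbb E[\log(1+p\xi)]$ takes values in $\mathbb R\cup\{-\infty\}$. *)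

theory Defs
  imports "HOL-Probability.Probability"
begin

definition elog :: "real \<Rightarrow> ereal" where
  "elog t = (if 0 < t then ereal (ln t) else -\<infinity>)"

text \<open>Expectation of an extended-real valued function: integral of positive part
  minus integral of negative part (meaningful when the positive part is finite).\<close>
definition eexpect :: "'w measure \<Rightarrow> ('w \<Rightarrow> ereal) \<Rightarrow> ereal" where
  "eexpect M f = enn2ereal (\<integral>\<^sup>+ w. e2ennreal (f w) \<partial>M) - enn2ereal (\<integral>\<^sup>+ w. e2ennreal (- f w) \<partial>M)"

end

theory Submission
  imports Defs
begin

text \<open>Write \<open>Z(\<omega>)\<close> for the \<open>Q\<close>-average of the products \<open>\<Prod>x\<in>S. 1 + \<omega> x\<close>; it is affine in each
  coordinate. Singling out a coordinate \<open>x0\<close> gives \<open>Z = A + B \<omega>(x0)\<close> with \<open>0 \<le> B \<le> A\<close> depending only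
  on the other coordinates, hence \<open>log Z = log A + log (1 + (B/A) \<omega>(x0))\<close>. Since \<open>\<omega>(x0)\<close> is
  independent of \<open>B/A \<in> [0,1]\<close>, the second term has expectation at most
  \<open>\<Phi> = max\<^sub>p E log (1 + p \<xi>)\<close>, and induction on \<open>|\<Lambda>|\<close> gives \<open>E log Z \<le> |\<Lambda>| \<Phi>\<close>. The maximum exists
  because \<open>p \<mapsto> E log (1 + p \<xi>)\<close> is upper semicontinuous on \<open>[0,1]\<close>.\<close>

lemma e2ennreal_elog: "e2ennreal (elog z) = ennreal (ln (max 1 z))"
proof (cases "0 < z")
  case True
  then show ?thesis
    by (cases "z \<ge> 1") (auto simp: elog_def ennreal_neg max_def)
next
  case False
  then show ?thesis by (simp add: elog_def e2ennreal_neg max_def)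
qed

lemma elog_neq_PInf [simp]: "elog z \<noteq> \<infinity>"
  by (simp add: elog_def)

lemma borel_measurable_elog [measurable]: "elog \<in> borel_measurable borel"
  unfolding elog_def[abs_def] by measurable

lemma elog_add_mult:
  assumes "0 \<le> B" "B \<le> A"
  shows "elog (A + B * y) = elog A + elog (1 + (B / A) * y)"
proof (cases "A = 0")
  case True
  with assms show ?thesis by (simp add: elog_def)
next
  case False
  then have A: "0 < A" using assms by auto
  then have eq: "A + B * y = A * (1 + (B / A) * y)" by (simp add: field_simps)
  show ?thesis
    unfolding eq using A by (simp add: elog_def ln_mult zero_less_mult_iff)
qed

lemma e2ennreal_elog_one_plus_mono:
  assumes "0 \<le> r" "r \<le> 1"
  shows "e2ennreal (elog (1 + r * y)) \<le> e2ennreal (elog (1 + y))"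
proof -
  have "r * y \<le> max 0 y"
    using assms by (cases "y \<ge> 0") (auto simp: mult_left_le_one_le mult_nonneg_nonpos max_def)
  then show ?thesis
    unfolding e2ennreal_elog by (intro ennreal_leI) simp
qed

lemma tendsto_elog:
  fixes z :: "nat \<Rightarrow> real"
  assumes nonneg: "\<And>n. 0 \<le> z n" and lim: "z \<longlonglongrightarrow> z0"
  shows "(\<lambda>n. elog (z n)) \<longlonglongrightarrow> elog z0"
proof (cases "z0 = 0")
  case True
  then have "elog z0 = -\<infinity>" by (simp add: elog_def)
  show ?thesis unfolding \<open>elog z0 = -\<infinity>\<close> tendsto_MInfty
  proof
    fix r
    have "eventually (\<lambda>n. z n < exp r) sequentially"
      using lim True by (intro order_tendstoD(2)) auto
    then show "eventually (\<lambda>n. elog (z n) < ereal r) sequentially"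
      by eventually_elim (auto simp: elog_def ln_less_cancel_iff[symmetric, where y = "exp r"])
  qed
next
  case False
  then have "0 < z0" using nonneg lim by (metis LIMSEQ_le_const order_le_less)
  then have "eventually (\<lambda>n. ereal (ln (z n)) = elog (z n)) sequentially"
    using lim by (auto elim: eventually_mono dest: order_tendstoD(1) simp: elog_def)
  moreover have "(\<lambda>n. ereal (ln (z n))) \<longlonglongrightarrow> ereal (ln z0)"
    using lim \<open>0 < z0\<close> by (intro tendsto_ereal tendsto_ln) auto
  ultimately have "(\<lambda>n. elog (z n)) \<longlonglongrightarrow> ereal (ln z0)"
    by (blast intro: Lim_transform_eventually)
  then show ?thesis
    using \<open>0 < z0\<close> by (simp add: elog_def)
qed

lemma tendsto_elog_one_plus_mult:
  assumes "\<And>n. q n \<in> {0..1::real}" "q \<longlonglongrightarrow> p" "-1 \<le> t"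
  shows "(\<lambda>n. elog (1 + q n * t)) \<longlonglongrightarrow> elog (1 + p * t)"
proof (rule tendsto_elog)
  fix n
  have "t \<le> q n * t \<or> 0 \<le> q n * t"
    using assms(1)[of n] mult_right_mono_neg[of "q n" 1 t] by (cases "0 \<le> t") auto
  then show "0 \<le> 1 + q n * t"
    using assms(3) by auto
next
  show "(\<lambda>n. 1 + q n * t) \<longlonglongrightarrow> 1 + p * t"
    using assms(2) by (intro tendsto_intros)
qed

lemma eexpect_cong_AE:
  assumes "AE w in M. f w = g w"
  shows "eexpect M f = eexpect M g"
  unfolding eexpect_def
  using assms by (intro arg_cong2[where f="(-)"] arg_cong[where f=enn2ereal] nn_integral_cong_AE) auto

lemma eexpect_distr:
  assumes "Y \<in> measurable M N" "f \<in> borel_measurable N"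
  shows "eexpect (distr M N Y) f = eexpect M (\<lambda>w. f (Y w))"
  unfolding eexpect_def using assms by (simp add: nn_integral_distr)

lemma ennreal_add_le: "ennreal (r + s) \<le> ennreal r + ennreal s"
  by (cases "r \<ge> 0"; cases "s \<ge> 0")
     (auto simp: ennreal_neg ennreal_plus[symmetric] ennreal_leI simp del: ennreal_plus)

lemma e2ennreal_add_le:
  "(a::ereal) \<noteq> \<infinity> \<Longrightarrow> b \<noteq> \<infinity> \<Longrightarrow> e2ennreal (a + b) \<le> e2ennreal a + e2ennreal b"
  by (cases a; cases b) (auto simp: ennreal_add_le)

lemma e2ennreal_add_pos_neg:
  assumes "(a::ereal) \<noteq> \<infinity>" "b \<noteq> \<infinity>"
  shows "e2ennreal (a + b) + e2ennreal (- a) + e2ennreal (- b)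
    = e2ennreal (- (a + b)) + e2ennreal a + e2ennreal b"
proof -
  have "ennreal (r + s) + ennreal (- r) + ennreal (- s) = ennreal (- r - s) + ennreal r + ennreal s"
    for r s :: real
    by (cases "r \<ge> 0"; cases "s \<ge> 0"; cases "r + s \<ge> 0")
       (auto simp: ennreal_neg ennreal_plus[symmetric] simp del: ennreal_plus)
  with assms show ?thesis
    by (cases a; cases b) auto
qed

lemma enn2ereal_diff_le_ereal_iff:
  fixes a b :: ennreal
  assumes "a < \<infinity>" "0 \<le> c"
  shows "enn2ereal a - enn2ereal b \<le> ereal c \<longleftrightarrow> a \<le> b + ennreal c"
  using assms
  by (cases a rule: ennreal_cases; cases b rule: ennreal_cases)
     (auto simp: ennreal_plus[symmetric] simp del: ennreal_plus)

lemma enn2ereal_diff_le_add_diff: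
  fixes a b c d e h :: ennreal
  assumes "a + b + c = d + e + h" "a < \<infinity>" "e < \<infinity>" "h < \<infinity>"
  shows "enn2ereal a - enn2ereal d \<le> (enn2ereal e - enn2ereal b) + (enn2ereal h - enn2ereal c)"
proof (cases "b = \<infinity> \<or> c = \<infinity>")
  case True
  then have "d = \<infinity>" using assms
    by (metis add.commute ennreal_add_eq_top infinity_ennreal_def less_irrefl)
  then show ?thesis using True assms
    by (cases a rule: ennreal_cases; cases e rule: ennreal_cases; cases h rule: ennreal_cases; auto)
next
  case False
  have "d < \<infinity>"
  proof -
    have "d \<le> d + e + h" by (simp add: add.assoc)
    also have "\<dots> = a + b + c" using assms(1) by simp
    also have "\<dots> < \<infinity>" using False assms(2) by (simp add: less_top[symmetric])
    finally show ?thesis .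
  qed
  have fin: "\<exists>r\<ge>0. x = ennreal r" if "x < \<infinity>" for x :: ennreal
    using that by (cases x rule: ennreal_cases) auto
  have b: "b < \<infinity>" and c: "c < \<infinity>"
    using False by (auto simp: less_top)
  obtain a' b' c' d' e' h' where
    a': "a = ennreal a'" "0 \<le> a'" and b': "b = ennreal b'" "0 \<le> b'" and c': "c = ennreal c'" "0 \<le> c'"
    and d': "d = ennreal d'" "0 \<le> d'" and e': "e = ennreal e'" "0 \<le> e'" and h': "h = ennreal h'" "0 \<le> h'"
    using fin[OF assms(2)] fin[OF b] fin[OF c] fin[OF \<open>d < \<infinity>\<close>] fin[OF assms(3)] fin[OF assms(4)] by blast
  have "ennreal (a' + b' + c') = ennreal (d' + e' + h')"
    using assms(1) a' b' c' d' e' h' by (simp add: ennreal_plus[symmetric] del: ennreal_plus)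
  then have "a' + b' + c' = d' + e' + h'"
    using a' b' c' d' e' h' by (subst (asm) ennreal_inj) auto
  then show ?thesis using a' b' c' d' e' h' by simp
qed

lemma nn_integral_e2ennreal_add_le:
  assumes [measurable]: "f \<in> borel_measurable M" "g \<in> borel_measurable M"
    and "\<And>w. f w \<noteq> \<infinity>" "\<And>w. g w \<noteq> \<infinity>"
  shows "(\<integral>\<^sup>+w. e2ennreal (f w + g w) \<partial>M) \<le> (\<integral>\<^sup>+w. e2ennreal (f w) \<partial>M) + (\<integral>\<^sup>+w. e2ennreal (g w) \<partial>M)"
  by (subst nn_integral_add[symmetric]) (auto intro!: nn_integral_mono e2ennreal_add_le assms)

text \<open>Only the positive parts need to be integrable: a summand with infinite negative part makes
  both sides \<open>-\<infinity>\<close>.\<close>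
lemma eexpect_add_le:
  assumes [measurable]: "f \<in> borel_measurable M" "g \<in> borel_measurable M"
    and not_PInf: "\<And>w. f w \<noteq> \<infinity>" "\<And>w. g w \<noteq> \<infinity>"
    and fin: "(\<integral>\<^sup>+w. e2ennreal (f w) \<partial>M) < \<infinity>" "(\<integral>\<^sup>+w. e2ennreal (g w) \<partial>M) < \<infinity>"
  shows "eexpect M (\<lambda>w. f w + g w) \<le> eexpect M f + eexpect M g"
proof -
  have "(\<integral>\<^sup>+w. e2ennreal (f w + g w) \<partial>M) + (\<integral>\<^sup>+w. e2ennreal (- f w) \<partial>M) + (\<integral>\<^sup>+w. e2ennreal (- g w) \<partial>M)
      = (\<integral>\<^sup>+w. e2ennreal (f w + g w) + e2ennreal (- f w) + e2ennreal (- g w) \<partial>M)"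
    by (simp add: nn_integral_add)
  also have "\<dots> = (\<integral>\<^sup>+w. e2ennreal (- (f w + g w)) + e2ennreal (f w) + e2ennreal (g w) \<partial>M)"
    by (intro nn_integral_cong e2ennreal_add_pos_neg not_PInf)
  also have "\<dots> = (\<integral>\<^sup>+w. e2ennreal (- (f w + g w)) \<partial>M) + (\<integral>\<^sup>+w. e2ennreal (f w) \<partial>M) + (\<integral>\<^sup>+w. e2ennreal (g w) \<partial>M)"
    by (simp add: nn_integral_add)
  finally have eq: "(\<integral>\<^sup>+w. e2ennreal (f w + g w) \<partial>M) + (\<integral>\<^sup>+w. e2ennreal (- f w) \<partial>M) + (\<integral>\<^sup>+w. e2ennreal (- g w) \<partial>M)
      = (\<integral>\<^sup>+w. e2ennreal (- (f w + g w)) \<partial>M) + (\<integral>\<^sup>+w. e2ennreal (f w) \<partial>M) + (\<integral>\<^sup>+w. e2ennreal (g w) \<partial>M)" .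
  have "(\<integral>\<^sup>+w. e2ennreal (f w + g w) \<partial>M) \<le> (\<integral>\<^sup>+w. e2ennreal (f w) \<partial>M) + (\<integral>\<^sup>+w. e2ennreal (g w) \<partial>M)"
    by (rule nn_integral_e2ennreal_add_le) (simp_all add: not_PInf)
  also have "\<dots> < \<infinity>"
    using fin by (simp add: less_top)
  finally show ?thesis
    using enn2ereal_diff_le_add_diff[OF eq _ fin] unfolding eexpect_def by simp
qed

lemma limsup_enn2ereal_diff_le:
  fixes a b :: "nat \<Rightarrow> ennreal"
  assumes "a \<longlonglongrightarrow> A" "B \<le> liminf b"
  shows "limsup (\<lambda>n. enn2ereal (a n) - enn2ereal (b n)) \<le> enn2ereal A - enn2ereal B"
proof -
  have "limsup (\<lambda>n. enn2ereal (a n) - enn2ereal (b n))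
      \<le> limsup (\<lambda>n. enn2ereal (a n)) + limsup (\<lambda>n. - enn2ereal (b n))"
    unfolding minus_ereal_def by (rule ereal_limsup_add_mono)
  also have "limsup (\<lambda>n. enn2ereal (a n)) = enn2ereal A"
    using assms(1) by (intro lim_imp_Limsup) auto
  also have "limsup (\<lambda>n. - enn2ereal (b n)) = - enn2ereal (liminf b)"
    by (simp add: ereal_Limsup_uminus Liminf_compose_continuous_mono[OF continuous_on_enn2ereal]
        mono_def less_eq_ennreal.rep_eq)
  also have "- enn2ereal (liminf b) \<le> - enn2ereal B"
    using assms(2) by (simp add: less_eq_ennreal.rep_eq)
  finally show ?thesis
    by (simp add: minus_ereal_def add_left_mono)
qed

lemma upper_semicontinuous_attains_sup:
  fixes f :: "'a::metric_space \<Rightarrow> ereal"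
  assumes "compact S" "S \<noteq> {}"
    and usc: "\<And>q p. (\<And>n. q n \<in> S) \<Longrightarrow> q \<longlonglongrightarrow> p \<Longrightarrow> p \<in> S \<Longrightarrow> limsup (\<lambda>n. f (q n)) \<le> f p"
  shows "\<exists>p\<in>S. \<forall>x\<in>S. f x \<le> f p"
proof -
  have "f ` S \<noteq> {}"
    using assms(2) by simp
  from Sup_countable_SUP[OF this] obtain y
    where y: "incseq y \<and> range y \<subseteq> f ` S \<and> Sup (f ` S) = (SUP n. y n)" ..
  then have "incseq y" "range y \<subseteq> f ` S" and sup: "Sup (f ` S) = (SUP n. y n)"
    by simp_all
  have "y n \<in> f ` S" for n
    using \<open>range y \<subseteq> f ` S\<close> by (rule range_subsetD)
  then have "\<exists>x. x \<in> S \<and> f x = y n" for n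
    by (metis imageE)
  then obtain q where q: "\<And>n. q n \<in> S" "\<And>n. f (q n) = y n"
    by metis
  obtain p r where "p \<in> S" "strict_mono r" and lim: "(q \<circ> r) \<longlonglongrightarrow> p"
    using seq_compactE[OF compact_imp_seq_compact[OF assms(1)], of q] q(1) by blast
  have "(y \<circ> r) \<longlonglongrightarrow> Sup (f ` S)"
    unfolding sup by (intro LIMSEQ_subseq_LIMSEQ LIMSEQ_SUP \<open>incseq y\<close> \<open>strict_mono r\<close>)
  then have "Sup (f ` S) = limsup (\<lambda>n. f ((q \<circ> r) n))"
    unfolding comp_def q(2) by (intro lim_imp_Limsup[symmetric]) (simp_all add: comp_def)
  also have "\<dots> \<le> f p"
    using lim q(1) \<open>p \<in> S\<close> by (intro usc) (auto simp: comp_def)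
  finally have "Sup (f ` S) \<le> f p" .
  moreover have "f x \<le> Sup (f ` S)" if "x \<in> S" for x
    using that by (rule SUP_upper)
  ultimately show ?thesis
    using \<open>p \<in> S\<close> by (blast intro: order_trans)
qed

locale log_growth = prob_space L for L :: "real measure" +
  assumes sets_L [measurable_cong]: "sets L = sets borel"
    and AE_ge_minus_one: "AE t in L. -1 \<le> t"
    and nn_integral_log_one_plus_finite: "(\<integral>\<^sup>+ t. e2ennreal (elog (1 + t)) \<partial>L) < \<infinity>"
begin

definition growth_rate :: "real \<Rightarrow> ereal" where
  "growth_rate p = eexpect L (\<lambda>t. elog (1 + p * t))"

lemma nn_integral_log_one_plus_mult_finite:
  assumes "p \<in> {0..1}"
  shows "(\<integral>\<^sup>+ t. e2ennreal (elog (1 + p * t)) \<partial>L) < \<infinity>"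
proof -
  have "(\<integral>\<^sup>+ t. e2ennreal (elog (1 + p * t)) \<partial>L) \<le> (\<integral>\<^sup>+ t. e2ennreal (elog (1 + t)) \<partial>L)"
    using assms by (intro nn_integral_mono e2ennreal_elog_one_plus_mono) auto
  then show ?thesis
    using nn_integral_log_one_plus_finite by (rule le_less_trans)
qed

lemma growth_rate_0: "growth_rate 0 = 0"
  by (simp add: growth_rate_def eexpect_def elog_def)

lemma growth_rate_less_PInf:
  assumes "p \<in> {0..1}"
  shows "growth_rate p < \<infinity>"
proof -
  have "growth_rate p \<le> enn2ereal (\<integral>\<^sup>+ t. e2ennreal (elog (1 + p * t)) \<partial>L)"
    unfolding growth_rate_def eexpect_def by (simp add: ereal_diff_le_self)
  also have "\<dots> < \<infinity>"
    using nn_integral_log_one_plus_mult_finite[OF assms] by simp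
  finally show ?thesis .
qed

lemma growth_rate_le_iff:
  assumes "p \<in> {0..1}" "0 \<le> c"
  shows "growth_rate p \<le> ereal c \<longleftrightarrow>
    (\<integral>\<^sup>+ t. e2ennreal (elog (1 + p * t)) \<partial>L) \<le> (\<integral>\<^sup>+ t. e2ennreal (- elog (1 + p * t)) \<partial>L) + ennreal c"
  unfolding growth_rate_def eexpect_def
  using nn_integral_log_one_plus_mult_finite[OF assms(1)] assms(2) by (rule enn2ereal_diff_le_ereal_iff)

text \<open>The positive part of \<open>log (1 + p \<xi>)\<close> is continuous in \<open>p\<close> by dominated convergence
  (it is dominated by that of \<open>log (1 + \<xi>)\<close>), the negative part lower semicontinuous by Fatou's
  lemma.\<close>
lemma growth_rate_upper_semicontinuous:
  assumes q: "\<And>n. q n \<in> {0..1}" and lim: "q \<longlonglongrightarrow> p"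
  shows "limsup (\<lambda>n. growth_rate (q n)) \<le> growth_rate p"
  unfolding growth_rate_def eexpect_def
proof (rule limsup_enn2ereal_diff_le)
  have conv: "AE t in L. (\<lambda>n. elog (1 + q n * t)) \<longlonglongrightarrow> elog (1 + p * t)"
    using AE_ge_minus_one by eventually_elim (rule tendsto_elog_one_plus_mult[OF q lim])
  show "(\<lambda>n. \<integral>\<^sup>+ t. e2ennreal (elog (1 + q n * t)) \<partial>L) \<longlonglongrightarrow> (\<integral>\<^sup>+ t. e2ennreal (elog (1 + p * t)) \<partial>L)"
  proof (rule nn_integral_dominated_convergence[where w="\<lambda>t. e2ennreal (elog (1 + t))"])
    show "AE t in L. e2ennreal (elog (1 + q n * t)) \<le> e2ennreal (elog (1 + t))" for n
      using q[of n] by (intro AE_I2 e2ennreal_elog_one_plus_mono) auto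
    show "AE t in L. (\<lambda>n. e2ennreal (elog (1 + q n * t))) \<longlonglongrightarrow> e2ennreal (elog (1 + p * t))"
      using conv by eventually_elim (rule tendsto_e2ennrealI)
  qed (use nn_integral_log_one_plus_finite in \<open>simp_all add: infinity_ennreal_def\<close>)
  have "(\<integral>\<^sup>+ t. e2ennreal (- elog (1 + p * t)) \<partial>L)
      = (\<integral>\<^sup>+ t. liminf (\<lambda>n. e2ennreal (- elog (1 + q n * t))) \<partial>L)"
    using conv by (intro nn_integral_cong_AE) (auto elim!: eventually_mono
        intro!: lim_imp_Liminf[symmetric] tendsto_e2ennrealI tendsto_uminus_ereal)
  also have "\<dots> \<le> liminf (\<lambda>n. \<integral>\<^sup>+ t. e2ennreal (- elog (1 + q n * t)) \<partial>L)"
    by (rule nn_integral_liminf) simp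
  finally show "(\<integral>\<^sup>+ t. e2ennreal (- elog (1 + p * t)) \<partial>L)
      \<le> liminf (\<lambda>n. \<integral>\<^sup>+ t. e2ennreal (- elog (1 + q n * t)) \<partial>L)" .
qed

lemma growth_rate_attains_max:
  "\<exists>p\<in>{0..1}. \<exists>\<Phi>. growth_rate p = ereal \<Phi> \<and> (\<forall>q\<in>{0..1}. growth_rate q \<le> ereal \<Phi>)"
proof -
  obtain p where p: "p \<in> {0..1}" and max: "\<forall>q\<in>{0..1}. growth_rate q \<le> growth_rate p"
    using upper_semicontinuous_attains_sup[of "{0..1::real}" growth_rate]
      growth_rate_upper_semicontinuous by auto
  have "0 \<le> growth_rate p"
    using max[rule_format, of 0] growth_rate_0 by simp
  with growth_rate_less_PInf[OF p] obtain \<Phi> where "growth_rate p = ereal \<Phi>"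
    by (cases "growth_rate p") auto
  with p max show ?thesis
    by auto
qed

end

definition subset_mix :: "'a set \<Rightarrow> ('a set \<Rightarrow> real) \<Rightarrow> ('a \<Rightarrow> real) \<Rightarrow> real" where
  "subset_mix K q \<omega> = (\<Sum>S\<in>Pow K. q S * (\<Prod>x\<in>S. 1 + \<omega> x))"

lemma subset_mix_fun_upd: "x0 \<notin> K \<Longrightarrow> subset_mix K q (fun_upd \<omega> x0 y) = subset_mix K q \<omega>"
  unfolding subset_mix_def by (intro sum.cong refl arg_cong2[where f="(*)"] prod.cong) auto

lemma subset_mix_restrict: "subset_mix K q (restrict \<omega> K) = subset_mix K q \<omega>"
  unfolding subset_mix_def by (intro sum.cong refl arg_cong2[where f="(*)"] prod.cong) auto

lemma expectation_prod_eq_subset_mix: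
  assumes "finite K" "set_pmf Q \<subseteq> Pow K"
  shows "measure_pmf.expectation Q (\<lambda>S. \<Prod>x\<in>S. 1 + \<omega> x) = subset_mix K (pmf Q) \<omega>"
  unfolding subset_mix_def using assms by (subst integral_measure_pmf[of "Pow K"]) auto

lemma sum_Pow_insert:
  assumes "finite K" "x0 \<notin> K"
  shows "(\<Sum>S\<in>Pow (insert x0 K). f S) = (\<Sum>T\<in>Pow K. f T) + (\<Sum>T\<in>Pow K. f (insert x0 T))"
proof -
  have "inj_on (insert x0) (Pow K)"
    using assms(2) by (auto simp: inj_on_def)
  then show ?thesis
    unfolding Pow_insert using assms
    by (subst sum.union_disjoint) (auto simp: sum.reindex)
qed

lemma subset_mix_insert:
  assumes "finite K" "x0 \<notin> K"
  shows "subset_mix (insert x0 K) q \<omega>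
    = subset_mix K (\<lambda>T. q T + q (insert x0 T)) \<omega> + subset_mix K (\<lambda>T. q (insert x0 T)) \<omega> * \<omega> x0"
proof -
  have "(\<Sum>T\<in>Pow K. q (insert x0 T) * (\<Prod>x\<in>insert x0 T. 1 + \<omega> x))
      = (\<Sum>T\<in>Pow K. q (insert x0 T) * (\<Prod>x\<in>T. 1 + \<omega> x) + q (insert x0 T) * (\<Prod>x\<in>T. 1 + \<omega> x) * \<omega> x0)"
  proof (intro sum.cong refl)
    fix T assume "T \<in> Pow K"
    then have "finite T" "x0 \<notin> T"
      using assms finite_subset by auto
    then show "q (insert x0 T) * (\<Prod>x\<in>insert x0 T. 1 + \<omega> x)
        = q (insert x0 T) * (\<Prod>x\<in>T. 1 + \<omega> x) + q (insert x0 T) * (\<Prod>x\<in>T. 1 + \<omega> x) * \<omega> x0"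
      by (simp add: algebra_simps)
  qed
  then show ?thesis
    unfolding subset_mix_def sum_Pow_insert[OF assms]
    by (simp add: sum.distrib sum_distrib_left sum_distrib_right algebra_simps)
qed

lemma subset_mix_insert_bounds:
  assumes "\<forall>x\<in>K. -1 \<le> \<omega> x" "\<forall>S. 0 \<le> q S"
  shows "0 \<le> subset_mix K (\<lambda>T. q (insert x0 T)) \<omega>"
    and "subset_mix K (\<lambda>T. q (insert x0 T)) \<omega> \<le> subset_mix K (\<lambda>T. q T + q (insert x0 T)) \<omega>"
proof -
  have "0 \<le> (\<Prod>x\<in>T. 1 + \<omega> x)" if "T \<in> Pow K" for T
    using that assms(1) by (intro prod_nonneg) force
  then show "0 \<le> subset_mix K (\<lambda>T. q (insert x0 T)) \<omega>"
    and "subset_mix K (\<lambda>T. q (insert x0 T)) \<omega> \<le> subset_mix K (\<lambda>T. q T + q (insert x0 T)) \<omega>"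
    unfolding subset_mix_def using assms(2)
    by (auto intro!: sum_nonneg sum_mono mult_right_mono simp: distrib_right)
qed

lemma borel_measurable_subset_mix:
  assumes "K \<subseteq> I" "finite K" and [measurable_cong]: "sets N = sets borel"
  shows "subset_mix K q \<in> borel_measurable (PiM I (\<lambda>_. N))"
  unfolding subset_mix_def[abs_def] by measurable (use assms(1,2) in auto)

context log_growth
begin

abbreviation iid :: "'a set \<Rightarrow> ('a \<Rightarrow> real) measure" where
  "iid K \<equiv> PiM K (\<lambda>_. L)"

lemma product_sigma_finite_L: "product_sigma_finite (\<lambda>_. L)"
  by (simp add: product_sigma_finite_def sigma_finite_measure_axioms)

lemma prob_space_iid: "prob_space (iid K)"
  by (simp add: prob_space_PiM prob_space_axioms)

lemma AE_iid_ge_minus_one: "finite K \<Longrightarrow> AE \<omega> in iid K. \<forall>x\<in>K. -1 \<le> \<omega> x"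
  by (intro AE_finite_allI AE_PiM_component[where P="\<lambda>t. -1 \<le> t"] AE_ge_minus_one prob_space_axioms)

lemma nn_integral_iid_insert_invariant:
  assumes K: "finite K" "x0 \<notin> K"
    and h: "h \<in> borel_measurable (iid (insert x0 K))" "\<And>\<omega> y. h (fun_upd \<omega> x0 y) = h \<omega>"
  shows "(\<integral>\<^sup>+\<omega>. h \<omega> \<partial>iid (insert x0 K)) = (\<integral>\<^sup>+\<omega>. h \<omega> \<partial>iid K)"
  using h by (simp add: product_sigma_finite.product_nn_integral_insert[OF product_sigma_finite_L K]
      emeasure_space_1)

lemma eexpect_iid_insert_invariant:
  assumes K: "finite K" "x0 \<notin> K"
    and f: "f \<in> borel_measurable (iid (insert x0 K))" "\<And>\<omega> y. f (fun_upd \<omega> x0 y) = f \<omega>"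
  shows "eexpect (iid (insert x0 K)) f = eexpect (iid K) f"
  unfolding eexpect_def using f
  by (simp add: nn_integral_iid_insert_invariant[OF K])

lemma eexpect_elog_one_plus_mult_component_le:
  assumes K: "finite K" "x0 \<notin> K"
    and r: "r \<in> borel_measurable (iid (insert x0 K))" "\<And>\<omega> y. r (fun_upd \<omega> x0 y) = r \<omega>"
      "AE \<omega> in iid K. r \<omega> \<in> {0..1}"
    and Phi: "\<forall>p\<in>{0..1}. growth_rate p \<le> ereal \<Phi>"
  shows "(\<integral>\<^sup>+\<omega>. e2ennreal (elog (1 + r \<omega> * \<omega> x0)) \<partial>iid (insert x0 K)) < \<infinity>"
    and "eexpect (iid (insert x0 K)) (\<lambda>\<omega>. elog (1 + r \<omega> * \<omega> x0)) \<le> ereal \<Phi>"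
proof -
  interpret product_sigma_finite "\<lambda>_. L"
    by (rule product_sigma_finite_L)
  interpret K': prob_space "iid (insert x0 K)"
    by (rule prob_space_iid)
  have "0 \<le> \<Phi>"
    using Phi[rule_format, of 0] growth_rate_0 by simp
  let ?pos = "\<lambda>p t. e2ennreal (elog (1 + p * t))"
  let ?neg = "\<lambda>p t. e2ennreal (- elog (1 + p * t))"
  have [measurable]: "(\<lambda>\<omega>. \<omega> x0) \<in> borel_measurable (iid (insert x0 K))"
    by measurable
  have pos: "(\<integral>\<^sup>+\<omega>. ?pos (r \<omega>) (\<omega> x0) \<partial>iid (insert x0 K)) = (\<integral>\<^sup>+\<omega>. \<integral>\<^sup>+t. ?pos (r \<omega>) t \<partial>L \<partial>iid K)"
    using r(1) by (subst product_nn_integral_insert[OF K]) (auto simp: r(2))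
  have "AE \<omega> in iid K. (\<integral>\<^sup>+t. ?pos (r \<omega>) t \<partial>L) \<le> (\<integral>\<^sup>+t. e2ennreal (elog (1 + t)) \<partial>L)"
    using r(3) by eventually_elim (auto intro!: nn_integral_mono e2ennreal_elog_one_plus_mono)
  then have "(\<integral>\<^sup>+\<omega>. \<integral>\<^sup>+t. ?pos (r \<omega>) t \<partial>L \<partial>iid K)
      \<le> (\<integral>\<^sup>+\<omega>. \<integral>\<^sup>+t. e2ennreal (elog (1 + t)) \<partial>L \<partial>iid K)"
    by (rule nn_integral_mono_AE)
  also have "\<dots> < \<infinity>"
    using nn_integral_log_one_plus_finite by (simp add: prob_space.emeasure_space_1[OF prob_space_iid])
  finally show fin: "(\<integral>\<^sup>+\<omega>. ?pos (r \<omega>) (\<omega> x0) \<partial>iid (insert x0 K)) < \<infinity>"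
    unfolding pos .
  have "AE \<omega> in iid K. (\<integral>\<^sup>+t. ?pos (r \<omega>) t \<partial>L) \<le> (\<integral>\<^sup>+t. ?neg (r \<omega>) t \<partial>L) + ennreal \<Phi>"
    using r(3) by eventually_elim (use Phi \<open>0 \<le> \<Phi>\<close> in \<open>simp add: growth_rate_le_iff\<close>)
  then have "(\<integral>\<^sup>+\<omega>. \<integral>\<^sup>+t. ?pos (r \<omega>) t \<partial>L \<partial>iid K)
      \<le> (\<integral>\<^sup>+\<omega>. (\<integral>\<^sup>+t. ?neg (r \<omega>) t \<partial>L) + ennreal \<Phi> \<partial>iid K)"
    by (rule nn_integral_mono_AE)
  also have "\<dots> = (\<integral>\<^sup>+\<omega>. \<integral>\<^sup>+t. ?neg (r \<omega>) t + ennreal \<Phi> \<partial>L \<partial>iid K)"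
    by (intro nn_integral_cong) (simp add: nn_integral_add emeasure_space_1 measurable_cong_sets[OF sets_L refl])
  also have "\<dots> = (\<integral>\<^sup>+\<omega>. ?neg (r \<omega>) (\<omega> x0) + ennreal \<Phi> \<partial>iid (insert x0 K))"
    using r(1) by (subst product_nn_integral_insert[OF K]) (auto simp: r(2))
  also have "\<dots> = (\<integral>\<^sup>+\<omega>. ?neg (r \<omega>) (\<omega> x0) \<partial>iid (insert x0 K)) + ennreal \<Phi>"
    using r(1) by (simp add: nn_integral_add K'.emeasure_space_1)
  finally have "(\<integral>\<^sup>+\<omega>. ?pos (r \<omega>) (\<omega> x0) \<partial>iid (insert x0 K))
      \<le> (\<integral>\<^sup>+\<omega>. ?neg (r \<omega>) (\<omega> x0) \<partial>iid (insert x0 K)) + ennreal \<Phi>"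
    unfolding pos .
  with fin \<open>0 \<le> \<Phi>\<close> show "eexpect (iid (insert x0 K)) (\<lambda>\<omega>. elog (1 + r \<omega> * \<omega> x0)) \<le> ereal \<Phi>"
    unfolding eexpect_def by (simp add: enn2ereal_diff_le_ereal_iff)
qed

lemma eexpect_elog_add_mult_component_le:
  fixes A B :: "('a \<Rightarrow> real) \<Rightarrow> real"
  assumes K: "finite K" "x0 \<notin> K"
    and [measurable]: "A \<in> borel_measurable (iid (insert x0 K))" "B \<in> borel_measurable (iid (insert x0 K))"
    and upd: "\<And>\<omega> y. A (fun_upd \<omega> x0 y) = A \<omega>" "\<And>\<omega> y. B (fun_upd \<omega> x0 y) = B \<omega>"
    and BA: "\<And>\<omega>. \<forall>x\<in>K. -1 \<le> \<omega> x \<Longrightarrow> 0 \<le> B \<omega> \<and> B \<omega> \<le> A \<omega>"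
    and Phi: "\<forall>p\<in>{0..1}. growth_rate p \<le> ereal \<Phi>"
    and finA: "(\<integral>\<^sup>+\<omega>. e2ennreal (elog (A \<omega>)) \<partial>iid K) < \<infinity>"
  shows "(\<integral>\<^sup>+\<omega>. e2ennreal (elog (A \<omega> + B \<omega> * \<omega> x0)) \<partial>iid (insert x0 K)) < \<infinity>"
    and "eexpect (iid (insert x0 K)) (\<lambda>\<omega>. elog (A \<omega> + B \<omega> * \<omega> x0))
      \<le> eexpect (iid K) (\<lambda>\<omega>. elog (A \<omega>)) + ereal \<Phi>"
proof -
  define r where "r \<omega> = B \<omega> / A \<omega>" for \<omega>
  have r [measurable]: "r \<in> borel_measurable (iid (insert x0 K))"
    unfolding r_def[abs_def] by measurable
  have "AE \<omega> in iid K. r \<omega> \<in> {0..1}"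
    using AE_iid_ge_minus_one[OF K(1)]
  proof eventually_elim
    case (elim \<omega>)
    with BA have "0 \<le> B \<omega>" "B \<omega> \<le> A \<omega>"
      by auto
    then show ?case
      by (auto simp: r_def divide_le_eq_1)
  qed
  with r have w: "(\<integral>\<^sup>+\<omega>. e2ennreal (elog (1 + r \<omega> * \<omega> x0)) \<partial>iid (insert x0 K)) < \<infinity>"
      "eexpect (iid (insert x0 K)) (\<lambda>\<omega>. elog (1 + r \<omega> * \<omega> x0)) \<le> ereal \<Phi>"
    using eexpect_elog_one_plus_mult_component_le[OF K, of r] Phi by (simp_all add: r_def upd)
  have "finite (insert x0 K)"
    using K(1) by simp
  from AE_iid_ge_minus_one[OF this]
  have dec: "AE \<omega> in iid (insert x0 K). elog (A \<omega> + B \<omega> * \<omega> x0) = elog (A \<omega>) + elog (1 + r \<omega> * \<omega> x0)"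
  proof eventually_elim
    case (elim \<omega>)
    with BA have "0 \<le> B \<omega>" "B \<omega> \<le> A \<omega>"
      by auto
    then show ?case
      unfolding r_def by (rule elog_add_mult)
  qed
  have "(\<integral>\<^sup>+\<omega>. e2ennreal (elog (A \<omega>)) \<partial>iid (insert x0 K)) = (\<integral>\<^sup>+\<omega>. e2ennreal (elog (A \<omega>)) \<partial>iid K)"
    by (rule nn_integral_iid_insert_invariant[OF K]) (simp_all add: upd)
  with finA have finA': "(\<integral>\<^sup>+\<omega>. e2ennreal (elog (A \<omega>)) \<partial>iid (insert x0 K)) < \<infinity>"
    by simp
  have "(\<integral>\<^sup>+\<omega>. e2ennreal (elog (A \<omega> + B \<omega> * \<omega> x0)) \<partial>iid (insert x0 K))
      = (\<integral>\<^sup>+\<omega>. e2ennreal (elog (A \<omega>) + elog (1 + r \<omega> * \<omega> x0)) \<partial>iid (insert x0 K))"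
    using dec by (intro nn_integral_cong_AE) auto
  also have "\<dots> \<le> (\<integral>\<^sup>+\<omega>. e2ennreal (elog (A \<omega>)) \<partial>iid (insert x0 K))
      + (\<integral>\<^sup>+\<omega>. e2ennreal (elog (1 + r \<omega> * \<omega> x0)) \<partial>iid (insert x0 K))"
    by (rule nn_integral_e2ennreal_add_le) simp_all
  also have "\<dots> < \<infinity>"
    using finA' w(1) by (simp add: less_top)
  finally show "(\<integral>\<^sup>+\<omega>. e2ennreal (elog (A \<omega> + B \<omega> * \<omega> x0)) \<partial>iid (insert x0 K)) < \<infinity>" .
  have "eexpect (iid (insert x0 K)) (\<lambda>\<omega>. elog (A \<omega> + B \<omega> * \<omega> x0))
      = eexpect (iid (insert x0 K)) (\<lambda>\<omega>. elog (A \<omega>) + elog (1 + r \<omega> * \<omega> x0))"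
    by (rule eexpect_cong_AE[OF dec])
  also have "\<dots> \<le> eexpect (iid (insert x0 K)) (\<lambda>\<omega>. elog (A \<omega>))
      + eexpect (iid (insert x0 K)) (\<lambda>\<omega>. elog (1 + r \<omega> * \<omega> x0))"
    by (rule eexpect_add_le) (use finA' w(1) in simp_all)
  also have "eexpect (iid (insert x0 K)) (\<lambda>\<omega>. elog (A \<omega>)) = eexpect (iid K) (\<lambda>\<omega>. elog (A \<omega>))"
    by (rule eexpect_iid_insert_invariant[OF K]) (simp_all add: upd)
  finally show "eexpect (iid (insert x0 K)) (\<lambda>\<omega>. elog (A \<omega> + B \<omega> * \<omega> x0))
      \<le> eexpect (iid K) (\<lambda>\<omega>. elog (A \<omega>)) + ereal \<Phi>"
    using w(2) by (simp add: add_left_mono order_trans)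
qed

lemma eexpect_elog_subset_mix_le:
  assumes "finite K" "\<forall>S. 0 \<le> q S" "(\<Sum>S\<in>Pow K. q S) = 1"
    and Phi: "\<forall>p\<in>{0..1}. growth_rate p \<le> ereal \<Phi>"
  shows "(\<integral>\<^sup>+\<omega>. e2ennreal (elog (subset_mix K q \<omega>)) \<partial>iid K) < \<infinity>
    \<and> eexpect (iid K) (\<lambda>\<omega>. elog (subset_mix K q \<omega>)) \<le> ereal (real (card K) * \<Phi>)"
  using assms(1-3)
proof (induction K arbitrary: q rule: finite_induct)
  case empty
  then show ?case
    by (simp add: subset_mix_def eexpect_def elog_def)
next
  case (insert x0 K)
  define q' where "q' T = q T + q (insert x0 T)" for T
  have "\<forall>S. 0 \<le> q' S" "(\<Sum>S\<in>Pow K. q' S) = 1"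
    using insert.prems sum_Pow_insert[OF insert.hyps, of q] by (simp_all add: q'_def sum.distrib)
  with insert.IH have IH: "(\<integral>\<^sup>+\<omega>. e2ennreal (elog (subset_mix K q' \<omega>)) \<partial>iid K) < \<infinity>"
      "eexpect (iid K) (\<lambda>\<omega>. elog (subset_mix K q' \<omega>)) \<le> ereal (real (card K) * \<Phi>)"
    by blast+
  define B where "B = subset_mix K (\<lambda>T. q (insert x0 T))"
  have split: "subset_mix (insert x0 K) q \<omega> = subset_mix K q' \<omega> + B \<omega> * \<omega> x0" for \<omega>
    unfolding q'_def B_def using insert.hyps by (rule subset_mix_insert)
  have bounds: "0 \<le> B \<omega> \<and> B \<omega> \<le> subset_mix K q' \<omega>" if "\<forall>x\<in>K. -1 \<le> \<omega> x" for \<omega>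
    using subset_mix_insert_bounds[OF that insert.prems(1)] by (simp add: B_def q'_def[abs_def])
  have meas: "subset_mix K p \<in> borel_measurable (iid (insert x0 K))" for p
    using insert.hyps by (intro borel_measurable_subset_mix sets_L) auto
  have upd: "subset_mix K p (fun_upd \<omega> x0 y) = subset_mix K p \<omega>" for p \<omega> y
    using insert.hyps(2) by (rule subset_mix_fun_upd)
  note step = eexpect_elog_add_mult_component_le[OF insert.hyps meas meas[of "\<lambda>T. q (insert x0 T)", folded B_def]
      upd upd[of "\<lambda>T. q (insert x0 T)", folded B_def] bounds Phi IH(1)]
  show ?case
  proof
    show "(\<integral>\<^sup>+\<omega>. e2ennreal (elog (subset_mix (insert x0 K) q \<omega>)) \<partial>iid (insert x0 K)) < \<infinity>"
      unfolding split by (rule step(1))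
    have "eexpect (iid (insert x0 K)) (\<lambda>\<omega>. elog (subset_mix (insert x0 K) q \<omega>))
        \<le> eexpect (iid K) (\<lambda>\<omega>. elog (subset_mix K q' \<omega>)) + ereal \<Phi>"
      unfolding split by (rule step(2))
    also have "\<dots> \<le> ereal (real (card K) * \<Phi>) + ereal \<Phi>"
      using IH(2) by (rule add_right_mono)
    also have "\<dots> = ereal (real (card (insert x0 K)) * \<Phi>)"
      using insert.hyps by (simp add: algebra_simps)
    finally show "eexpect (iid (insert x0 K)) (\<lambda>\<omega>. elog (subset_mix (insert x0 K) q \<omega>))
        \<le> ereal (real (card (insert x0 K)) * \<Phi>)" .
  qed
qed

end

lemma (in prob_space) eexpect_indep_vars_restrict:
  assumes "I \<noteq> {}" "indep_vars (\<lambda>_. borel) X I" "\<forall>i\<in>I. distr M borel (X i) = N"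
    and f: "f \<in> borel_measurable (PiM I (\<lambda>_. borel))"
  shows "eexpect M (\<lambda>w. f (\<lambda>i\<in>I. X i w)) = eexpect (PiM I (\<lambda>_. N)) f"
proof -
  have X [measurable]: "X i \<in> borel_measurable M" if "i \<in> I" for i
    using assms(2) that by (simp add: indep_vars_def)
  have Y: "(\<lambda>w. \<lambda>i\<in>I. X i w) \<in> measurable M (PiM I (\<lambda>_. borel))"
    by measurable
  have "distr M (PiM I (\<lambda>_. borel)) (\<lambda>w. \<lambda>i\<in>I. X i w) = PiM I (\<lambda>i. distr M borel (X i))"
    using indep_vars_iff_distr_eq_PiM'[OF assms(1) X] assms(2) by simp
  also have "\<dots> = PiM I (\<lambda>_. N)"
    using assms(3) by (intro PiM_cong) auto
  finally show ?thesis
    using eexpect_distr[OF Y f] by simp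
qed

theorem mainTheorem4:
  fixes M :: "'w measure" and X :: "'a \<Rightarrow> 'w \<Rightarrow> real" and \<Lambda> :: "'a set"
    and L :: "real measure" and Q :: "'a set pmf"
  assumes "prob_space M"
    and "finite \<Lambda>" and "\<Lambda> \<noteq> {}"
    and "prob_space.indep_vars M (\<lambda>_. borel) X \<Lambda>"
    and "\<forall>x\<in>\<Lambda>. distr M borel (X x) = L"
    and "AE t in L. -1 \<le> t"
    and "(\<integral>\<^sup>+ t. e2ennreal (elog (1 + t)) \<partial>L) < \<infinity>"
    and "set_pmf Q \<subseteq> Pow \<Lambda>"
  shows "\<exists>p\<in>{0..1::real}.
           (\<forall>q\<in>{0..1::real}. eexpect L (\<lambda>t. elog (1 + q * t)) \<le> eexpect L (\<lambda>t. elog (1 + p * t)))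
         \<and> eexpect M (\<lambda>w. elog (measure_pmf.expectation Q (\<lambda>S. \<Prod>x\<in>S. 1 + X x w)))
             \<le> ereal (real (card \<Lambda>)) * eexpect L (\<lambda>t. elog (1 + p * t))"
proof -
  interpret M: prob_space M by fact
  obtain x1 where "x1 \<in> \<Lambda>"
    using assms(3) by blast
  with assms(5) have L: "L = distr M borel (X x1)"
    by simp
  interpret log_growth L
  proof (intro log_growth.intro log_growth_axioms.intro)
    show "prob_space L"
      unfolding L using assms(4) \<open>x1 \<in> \<Lambda>\<close> by (intro M.prob_space_distr) (simp add: M.indep_vars_def)
  qed (use assms(6,7) L in simp_all)
  obtain p \<Phi> where p: "p \<in> {0..1}" "growth_rate p = ereal \<Phi>"
    and max: "\<forall>q\<in>{0..1}. growth_rate q \<le> ereal \<Phi>"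
    using growth_rate_attains_max by blast
  have "(\<lambda>\<omega>. elog (subset_mix \<Lambda> (pmf Q) \<omega>)) \<in> borel_measurable (PiM \<Lambda> (\<lambda>_. borel))"
    using assms(2) by (intro measurable_compose[OF borel_measurable_subset_mix borel_measurable_elog]) auto
  from M.eexpect_indep_vars_restrict[OF assms(3,4,5) this]
  have "eexpect M (\<lambda>w. elog (measure_pmf.expectation Q (\<lambda>S. \<Prod>x\<in>S. 1 + X x w)))
      = eexpect (iid \<Lambda>) (\<lambda>\<omega>. elog (subset_mix \<Lambda> (pmf Q) \<omega>))"
    using assms(2,8) by (simp add: expectation_prod_eq_subset_mix subset_mix_restrict)
  also have "\<dots> \<le> ereal (real (card \<Lambda>)) * growth_rate p"
    using eexpect_elog_subset_mix_le[OF assms(2) _ _ max] sum_pmf_eq_1[OF _ assms(8)] assms(2) p(2) by simp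
  finally show ?thesis
    using p max unfolding growth_rate_def by (intro bexI[of _ p]) auto
qed

end
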